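(* Let $\varepsilon>0$ and grant (NormEq) with constant $C'$ and (H) with parameters $r$ and $\alpha$. Then every $f\in F$ with $\|f-f^*\|_{L_2}\le r$ satisfies $\|f-f^*\|_{L_2}^2\le\frac4\alpha P\mathcal L_f$.
   Context: Setting: $F$ is a convex class of measurable functions $\mathcal X\to\mathbb R$, $\mathcal Y=\mathbb R$, $(X,Y)\sim P$, $X\sim\mu$, $\|g\|_{L_p}=(\mathbb E|g(X)|^p)^{1/p}$. For $\delta>0$, $\rho_H(t)=t^2/2$ if $|t|\le\delta$ and $\rho_H(t)=\delta|t|-\delta^2/2$ otherwise; the Huber loss is $\ell_f(x,y)=\rho_H(y-f(x))$. $f^*$ is the (unique) minimizer of $f\mapsto P\ell_f$ over $F$, $\mathcal L_f=\ell_f-\ell_{f^*}$, $P\mathcal L_f=\mathbb E\mathcal L_f(X,Y)$. (NormEq): there is $C'>0$ such that $\|f-f^*\|_{L_{2+\varepsilon}}\le C'\|f-f^*\|_{L_2}$ for all $f\in F$. (H): letting $F_{Y|X=x}$ be the conditional c.d.f. of $Y$ given $X=x$, there exist $\alpha>0$, $r>0$ such that for all $x\in\mathcal X$ and $z\in\mathbb R$ with $|z-f^*(x)|\le(\sqrt2C')^{(2+\varepsilon)/\varepsilon}r$, $F_{Y|X=x}(z+\delta)-F_{Y|X=x}(z-\delta)\ge\alpha$. *)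

theory Defs
  imports "HOL-Probability.Probability"
begin

definition huber :: "real \<Rightarrow> real \<Rightarrow> real" where
  "huber \<delta> t = (if \<bar>t\<bar> \<le> \<delta> then t\<^sup>2 / 2 else \<delta> * \<bar>t\<bar> - \<delta>\<^sup>2 / 2)"

definition huber_loss :: "real \<Rightarrow> ('x \<Rightarrow> real) \<Rightarrow> 'x \<times> real \<Rightarrow> real" where
  "huber_loss \<delta> f = (\<lambda>(x, y). huber \<delta> (y - f x))"

text \<open>Joint law P of (X,Y): X has law mu, and the conditional law of Y given X = x is K x.\<close>
definition joint_law :: "'x measure \<Rightarrow> ('x \<Rightarrow> real measure) \<Rightarrow> ('x \<times> real) measure" where
  "joint_law \<mu> K = \<mu> \<bind> (\<lambda>x. distr (K x) (\<mu> \<Otimes>\<^sub>M borel) (\<lambda>y. (x, y)))"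

definition cond_cdf :: "('x \<Rightarrow> real measure) \<Rightarrow> 'x \<Rightarrow> real \<Rightarrow> real" where
  "cond_cdf K x z = measure (K x) {..z}"

definition memLp :: "'x measure \<Rightarrow> real \<Rightarrow> ('x \<Rightarrow> real) \<Rightarrow> bool" where
  "memLp \<mu> p g \<longleftrightarrow> g \<in> borel_measurable \<mu> \<and> integrable \<mu> (\<lambda>x. \<bar>g x\<bar> powr p)"

text \<open>L_p norm (meaningful for g in L_p).\<close>
definition Lnorm :: "'x measure \<Rightarrow> real \<Rightarrow> ('x \<Rightarrow> real) \<Rightarrow> real" where
  "Lnorm \<mu> p g = (\<integral>x. \<bar>g x\<bar> powr p \<partial>\<mu>) powr (1 / p)"

definition convex_class :: "('x \<Rightarrow> real) set \<Rightarrow> bool" where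
  "convex_class F \<longleftrightarrow> (\<forall>f\<in>F. \<forall>g\<in>F. \<forall>t::real. 0 \<le> t \<and> t \<le> 1 \<longrightarrow>
      (\<lambda>x. t * f x + (1 - t) * g x) \<in> F)"

end

theory Submission
  imports Defs
begin

text \<open>
  Write \<open>g = f - f\<^sup>*\<close> and \<open>u = Y - f\<^sup>*(X)\<close>, and let \<open>D(u, g) = \<rho>(u - g) - \<rho>(u) + g \<rho>'(u)\<close> be the
  Bregman divergence of the Huber function \<open>\<rho>\<close>. Optimality of \<open>f\<^sup>*\<close> on the segment from \<open>f\<^sup>*\<close>
  to \<open>f\<close>, which lies in \<open>F\<close> by convexity, gives \<open>E[g(X) \<rho>'(u)] \<le> 0\<close>, hence
  \<open>E D(u, g(X)) \<le> P\<L>\<^sub>f\<close>. Since \<open>\<rho>''\<close> is the indicator of \<open>[-\<delta>, \<delta>]\<close>,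
  \<open>D(u, g) = \<integral>\<^sub>0\<^sup>g \<integral>\<^sub>0\<^sup>t 1{|u - s| \<le> \<delta>} ds dt\<close>; so given \<open>X = x\<close>, condition (H) bounds the
  conditional expectation of \<open>D\<close> below by \<open>\<alpha> g(x)\<^sup>2 / 2\<close> as long as \<open>|g(x)| \<le> R\<close>, where
  \<open>R = (\<surd>2 C')\<^bsup>(2+\<epsilon>)/\<epsilon>\<^esup> r\<close>. Finally (NormEq) and a Markov-type bound show that the part of
  \<open>E g\<^sup>2\<close> where \<open>|g| > R\<close> is at most half of \<open>\<parallel>g\<parallel>\<^sup>2\<close>.
\<close>

definition huber_deriv :: "real \<Rightarrow> real \<Rightarrow> real" where
  "huber_deriv \<delta> w = max (- \<delta>) (min \<delta> w)"

lemma abs_huber_deriv_le: "\<delta> \<ge> 0 \<Longrightarrow> \<bar>huber_deriv \<delta> w\<bar> \<le> \<delta>"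
  by (auto simp: huber_deriv_def)

lemma abs_mult_huber_deriv_le: "\<delta> \<ge> 0 \<Longrightarrow> \<bar>G * huber_deriv \<delta> w\<bar> \<le> \<delta> * \<bar>G\<bar>"
  using mult_left_mono[OF abs_huber_deriv_le[of \<delta> w], of "\<bar>G\<bar>"] by (simp add: abs_mult mult.commute)

lemma huber_deriv_uminus: "\<delta> \<ge> 0 \<Longrightarrow> huber_deriv \<delta> (- w) = - huber_deriv \<delta> w"
  by (auto simp: huber_deriv_def)

lemma huber_uminus: "huber \<delta> (- t) = huber \<delta> t"
  by (simp add: huber_def)

text \<open>
  The Huber function is the convex conjugate of \<open>s\<^sup>2 / 2\<close> restricted to \<open>[-\<delta>, \<delta>]\<close>, and
  \<open>huber_deriv \<delta> v\<close> is the maximising slope. Both tangent bounds below follow from this.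
\<close>

lemma huber_eq_huber_deriv:
  assumes "\<delta> \<ge> 0" shows "huber \<delta> v = huber_deriv \<delta> v * v - (huber_deriv \<delta> v)\<^sup>2 / 2"
  using assms by (auto simp: huber_def huber_deriv_def power2_eq_square abs_if)

lemma huber_ge_linear:
  assumes "\<bar>s\<bar> \<le> \<delta>" shows "s * v - s\<^sup>2 / 2 \<le> huber \<delta> v"
proof -
  consider "\<bar>v\<bar> \<le> \<delta>" | "v > \<delta>" | "v < - \<delta>" by linarith
  then have "huber \<delta> v - (s * v - s\<^sup>2 / 2) \<ge> 0"
  proof cases
    case 1
    then have "huber \<delta> v - (s * v - s\<^sup>2 / 2) = (v - s)\<^sup>2 / 2"
      by (simp add: huber_def power2_eq_square algebra_simps)
    then show ?thesis using zero_le_power2[of "v - s"] by linarith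
  next
    case 2
    with assms have hv: "huber \<delta> v = \<delta> * v - \<delta>\<^sup>2 / 2" by (simp add: huber_def)
    have "huber \<delta> v - (s * v - s\<^sup>2 / 2) = (\<delta> - s) * (v - \<delta>) + (\<delta> - s)\<^sup>2 / 2"
      unfolding hv by (simp add: power2_eq_square field_simps)
    then show ?thesis using 2 assms by simp
  next
    case 3
    with assms have hv: "huber \<delta> v = - \<delta> * v - \<delta>\<^sup>2 / 2" by (simp add: huber_def)
    have "huber \<delta> v - (s * v - s\<^sup>2 / 2) = (\<delta> + s) * (- v - \<delta>) + (\<delta> + s)\<^sup>2 / 2"
      unfolding hv by (simp add: power2_eq_square field_simps)
    then show ?thesis using 3 assms by simp
  qed
  then show ?thesis by simp
qed

lemma huber_deriv_projection:
  assumes "\<bar>s\<bar> \<le> \<delta>" shows "(w - huber_deriv \<delta> w) * (s - huber_deriv \<delta> w) \<le> 0"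
  using assms by (cases "w < - \<delta>"; cases "w > \<delta>") (auto simp: huber_deriv_def mult_le_0_iff)

lemma huber_tangent_le:
  assumes "\<delta> \<ge> 0" shows "huber \<delta> w + (v - w) * huber_deriv \<delta> w \<le> huber \<delta> v"
  using huber_ge_linear[OF abs_huber_deriv_le[OF assms], of w v] huber_eq_huber_deriv[OF assms, of w]
  by (simp add: algebra_simps)

lemma huber_le_tangent_add_square:
  assumes "\<delta> \<ge> 0"
  shows "huber \<delta> v \<le> huber \<delta> w + (v - w) * huber_deriv \<delta> w + (v - w)\<^sup>2 / 2"
proof -
  define a b where "a = huber_deriv \<delta> v" and "b = huber_deriv \<delta> w"
  have "huber \<delta> w + (v - w) * b + (v - w)\<^sup>2 / 2 - huber \<delta> v
        = ((v - a) - (w - b))\<^sup>2 / 2 - (w - b) * (a - b)"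
    unfolding huber_eq_huber_deriv[OF assms, of v] huber_eq_huber_deriv[OF assms, of w] a_def b_def
    by (simp add: power2_eq_square field_simps)
  moreover have "(w - b) * (a - b) \<le> 0"
    unfolding a_def b_def by (rule huber_deriv_projection[OF abs_huber_deriv_le[OF assms]])
  ultimately show ?thesis
    using zero_le_power2[of "(v - a) - (w - b)"] unfolding b_def by linarith
qed

lemma borel_measurable_huber[measurable (raw)]:
  assumes [measurable]: "f \<in> borel_measurable M"
  shows "(\<lambda>x. huber \<delta> (f x)) \<in> borel_measurable M"
  unfolding huber_def by measurable

lemma borel_measurable_huber_deriv[measurable (raw)]:
  assumes [measurable]: "f \<in> borel_measurable M"
  shows "(\<lambda>x. huber_deriv \<delta> (f x)) \<in> borel_measurable M"
  unfolding huber_deriv_def by measurable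

lemma huber_first_order_optimality:
  fixes P :: "'a measure" and u g :: "'a \<Rightarrow> real"
  assumes \<delta>: "\<delta> \<ge> 0"
    and loss_int: "\<And>t. 0 \<le> t \<Longrightarrow> t \<le> 1 \<Longrightarrow> integrable P (\<lambda>z. huber \<delta> (u z - t * g z))"
    and optimal: "\<And>t. 0 < t \<Longrightarrow> t \<le> 1 \<Longrightarrow>
                    (\<integral>z. huber \<delta> (u z) \<partial>P) \<le> (\<integral>z. huber \<delta> (u z - t * g z) \<partial>P)"
    and g_sq: "integrable P (\<lambda>z. (g z)\<^sup>2)"
    and grad_int: "integrable P (\<lambda>z. g z * huber_deriv \<delta> (u z))"
  shows "(\<integral>z. g z * huber_deriv \<delta> (u z) \<partial>P) \<le> 0"
proof -
  define D where "D = (\<integral>z. g z * huber_deriv \<delta> (u z) \<partial>P)"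
  define Q where "Q = (\<integral>z. (g z)\<^sup>2 \<partial>P)"
  have step: "D \<le> t / 2 * Q" if t: "0 < t" "t \<le> 1" for t
  proof -
    have "huber \<delta> (u z - t * g z) \<le> huber \<delta> (u z) - t * (g z * huber_deriv \<delta> (u z)) + t\<^sup>2 / 2 * (g z)\<^sup>2" for z
      using huber_le_tangent_add_square[OF \<delta>, of "u z - t * g z" "u z"] by (simp add: power_mult_distrib)
    then have "(\<integral>z. huber \<delta> (u z - t * g z) \<partial>P)
        \<le> (\<integral>z. huber \<delta> (u z) - t * (g z * huber_deriv \<delta> (u z)) + t\<^sup>2 / 2 * (g z)\<^sup>2 \<partial>P)"
      using loss_int[of t] loss_int[of 0] g_sq grad_int t by (intro integral_mono) auto
    also have "\<dots> = (\<integral>z. huber \<delta> (u z) \<partial>P) - t * D + t\<^sup>2 / 2 * Q"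
      using loss_int[of 0] g_sq grad_int by (simp add: D_def Q_def)
    finally have "(\<integral>z. huber \<delta> (u z - t * g z) \<partial>P) \<le> (\<integral>z. huber \<delta> (u z) \<partial>P) - t * D + t\<^sup>2 / 2 * Q" .
    with optimal[OF t] have "t * D \<le> t * (t / 2 * Q)"
      by (simp add: power2_eq_square algebra_simps)
    with t show ?thesis by simp
  qed
  have lim: "(\<lambda>n. inverse (real (Suc n)) * (Q / 2)) \<longlonglongrightarrow> 0 * (Q / 2)"
    by (intro tendsto_intros LIMSEQ_inverse_real_of_nat)
  have bound: "D \<le> inverse (real (Suc n)) * (Q / 2)" for n
    using step[of "inverse (real (Suc n))"] by (simp add: field_simps)
  have "D \<le> 0 * (Q / 2)"
    by (rule LIMSEQ_le_const[OF lim]) (use bound in blast)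
  then show ?thesis by (simp add: D_def)
qed

definition huber_bregman :: "real \<Rightarrow> real \<Rightarrow> real \<Rightarrow> real" where
  "huber_bregman \<delta> v G = huber \<delta> (v - G) - huber \<delta> v + G * huber_deriv \<delta> v"

lemma huber_bregman_nonneg: "\<delta> \<ge> 0 \<Longrightarrow> 0 \<le> huber_bregman \<delta> v G"
  using huber_tangent_le[of \<delta> v "v - G"] by (simp add: huber_bregman_def algebra_simps)

lemma abs_huber_bregman_le:
  assumes "\<delta> \<ge> 0" shows "\<bar>huber_bregman \<delta> v G\<bar> \<le> 2 * \<delta> * \<bar>G\<bar>"
proof -
  have "huber \<delta> (v - G) - huber \<delta> v \<le> - G * huber_deriv \<delta> (v - G)"
    using huber_tangent_le[OF assms, of "v - G" v] by simp
  then have "huber_bregman \<delta> v G \<le> 2 * \<delta> * \<bar>G\<bar>"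
    using abs_mult_huber_deriv_le[OF assms, of G "v - G"] abs_mult_huber_deriv_le[OF assms, of G v]
    unfolding huber_bregman_def abs_le_iff by linarith
  with huber_bregman_nonneg[OF assms, of v G] show ?thesis by simp
qed

lemma huber_bregman_uminus: "\<delta> \<ge> 0 \<Longrightarrow> huber_bregman \<delta> (- v) (- G) = huber_bregman \<delta> v G"
  using huber_uminus[of \<delta> "v - G"] by (simp add: huber_bregman_def huber_uminus huber_deriv_uminus)

lemma borel_measurable_huber_bregman[measurable (raw)]:
  assumes [measurable]: "f \<in> borel_measurable M" "g \<in> borel_measurable M"
  shows "(\<lambda>x. huber_bregman \<delta> (f x) (g x)) \<in> borel_measurable M"
  unfolding huber_bregman_def by measurable

text \<open>
  The next two lemmas are a Riemann-sum version of
  \<open>huber_bregman \<delta> v G = \<integral>\<^sub>0\<^sup>G \<integral>\<^sub>0\<^sup>t 1{|v - u| \<le> \<delta>} du dt\<close>, with step \<open>s\<close> and \<open>G = n s\<close>.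
  Clipping to \<open>[-\<delta>, \<delta> + s]\<close> instead of \<open>[-\<delta>, \<delta>]\<close> (the function \<open>c\<close>) makes every increment over
  a step of length \<open>s\<close> at least \<open>s\<close> times the window indicator, at the price of an error \<open>s\<close>.
\<close>

lemma huber_deriv_diff_ge_count:
  assumes "\<delta> > 0" "s > 0"
  shows "s * (\<Sum>i\<in>{1..j}. indicator {real i * s - \<delta> .. real i * s + \<delta>} v) - s
           \<le> huber_deriv \<delta> v - huber_deriv \<delta> (v - real j * s)"
proof -
  define c where "c w = min (\<delta> + s) (max (- \<delta>) w)" for w
  have c_step: "s * indicator {-\<delta>..\<delta>} (w - s) \<le> c w - c (w - s)" for w
    using assms by (auto simp: c_def indicator_def)
  have "s * (\<Sum>i\<in>{1..j}. indicator {real i * s - \<delta> .. real i * s + \<delta>} v) \<le> c v - c (v - real j * s)"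
  proof (induction j)
    case (Suc j)
    have "indicator {real (Suc j) * s - \<delta> .. real (Suc j) * s + \<delta>} v
          = (indicator {-\<delta>..\<delta>} ((v - real j * s) - s) :: real)"
      by (auto simp: indicator_def algebra_simps)
    with Suc c_step[of "v - real j * s"] show ?case
      by (simp add: algebra_simps)
  qed simp
  moreover have c_close: "0 \<le> c w - huber_deriv \<delta> w \<and> c w - huber_deriv \<delta> w \<le> s" for w
    using assms by (auto simp: c_def huber_deriv_def)
  ultimately show ?thesis
    using c_close[of v] c_close[of "v - real j * s"] by linarith
qed

lemma huber_bregman_ge_riemann_sum_pos:
  assumes "\<delta> > 0" "s > 0"
  shows "s\<^sup>2 * (\<Sum>j<n. \<Sum>i\<in>{1..j}. indicator {real i * s - \<delta> .. real i * s + \<delta>} v) - real n * s\<^sup>2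
           \<le> huber_bregman \<delta> v (real n * s)"
proof (induction n)
  case (Suc n)
  have "huber_bregman \<delta> v (real (Suc n) * s) - huber_bregman \<delta> v (real n * s)
        = huber \<delta> (v - real n * s - s) - huber \<delta> (v - real n * s) + s * huber_deriv \<delta> v"
    by (simp add: huber_bregman_def algebra_simps)
  also have "\<dots> \<ge> s * (huber_deriv \<delta> v - huber_deriv \<delta> (v - real n * s))"
    using huber_tangent_le[of \<delta> "v - real n * s" "v - real n * s - s"] assms
    by (simp add: algebra_simps)
  finally have "s * (huber_deriv \<delta> v - huber_deriv \<delta> (v - real n * s))
      \<le> huber_bregman \<delta> v (real (Suc n) * s) - huber_bregman \<delta> v (real n * s)" .
  moreover have "s * (s * (\<Sum>i\<in>{1..n}. indicator {real i * s - \<delta> .. real i * s + \<delta>} v) - s)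
      \<le> s * (huber_deriv \<delta> v - huber_deriv \<delta> (v - real n * s))"
    using huber_deriv_diff_ge_count[OF assms, where j=n and v=v] assms by (intro mult_left_mono) auto
  ultimately show ?case
    using Suc by (simp add: power2_eq_square algebra_simps)
qed (simp add: huber_bregman_def)

lemma huber_bregman_ge_riemann_sum:
  assumes "\<delta> > 0"
  shows "s\<^sup>2 * (\<Sum>j<n. \<Sum>i\<in>{1..j}. indicator {real i * s - \<delta> .. real i * s + \<delta>} v) - real n * s\<^sup>2
           \<le> huber_bregman \<delta> v (real n * s)"
proof -
  consider "s > 0" | "s < 0" | "s = 0" by linarith
  then show ?thesis
  proof cases
    case 1
    then show ?thesis using huber_bregman_ge_riemann_sum_pos[OF assms] by blast
  next
    case 2
    have "indicator {real i * s - \<delta> .. real i * s + \<delta>} v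
          = (indicator {real i * (- s) - \<delta> .. real i * (- s) + \<delta>} (- v) :: real)" for i
      by (auto simp: indicator_def)
    moreover have "huber_bregman \<delta> (- v) (real n * (- s)) = huber_bregman \<delta> v (real n * s)"
      using huber_bregman_uminus[of \<delta> v "real n * s"] assms by simp
    ultimately show ?thesis
      using huber_bregman_ge_riemann_sum_pos[OF assms, where s="- s" and n=n and v="- v"] 2
      by simp
  next
    case 3
    then show ?thesis using huber_bregman_nonneg assms by simp
  qed
qed

lemma integrable_huber_bregman:
  fixes M :: "real measure"
  assumes "finite_measure M" "sets M = sets borel" "\<delta> \<ge> 0"
  shows "integrable M (\<lambda>y. huber_bregman \<delta> (y - a) G)"
proof (rule Bochner_Integration.integrable_bound)
  show "integrable M (\<lambda>_. 2 * \<delta> * \<bar>G\<bar>)"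
    using assms(1) by (simp add: finite_measure.integrable_const)
  show "(\<lambda>y. huber_bregman \<delta> (y - a) G) \<in> borel_measurable M"
    unfolding measurable_cong_sets[OF assms(2) refl] by measurable
  show "AE y in M. norm (huber_bregman \<delta> (y - a) G) \<le> norm (2 * \<delta> * \<bar>G\<bar>)"
    using abs_huber_bregman_le[OF assms(3)] assms(3) by simp
qed

lemma huber_bregman_integral_ge_approx:
  fixes M :: "real measure"
  assumes M: "prob_space M" and sets_M: "sets M = sets borel" and \<delta>: "\<delta> > 0" and n: "n > 0"
    and window: "\<And>c. \<bar>c\<bar> \<le> \<bar>G\<bar> \<Longrightarrow> \<alpha> \<le> measure M {a + c - \<delta> .. a + c + \<delta>}"
  shows "\<alpha> / 2 * G\<^sup>2 * (1 - 1 / real n) - G\<^sup>2 * (1 / real n) \<le> (\<integral>y. huber_bregman \<delta> (y - a) G \<partial>M)"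
proof -
  interpret prob_space M by fact
  define s where "s = G / real n"
  define A where "A i = {a + real i * s - \<delta> .. a + real i * s + \<delta>}" for i :: nat
  have A_sets: "A i \<in> sets M" for i
    using sets_M by (simp add: A_def)
  then have A_int: "integrable M (indicator (A i) :: real \<Rightarrow> real)" for i
    by (simp add: less_top[symmetric])
  have A_measure: "\<alpha> \<le> measure M (A i)" if "i \<le> n" for i
  proof -
    have "\<bar>real i * s\<bar> \<le> \<bar>G\<bar>"
      using that n by (simp add: s_def abs_mult divide_le_eq mult.commute mult_left_mono)
    then show ?thesis
      using window by (simp add: A_def add.assoc)
  qed
  have riemann: "s\<^sup>2 * (\<Sum>j<n. \<Sum>i\<in>{1..j}. indicator (A i) y) - real n * s\<^sup>2
      \<le> huber_bregman \<delta> (y - a) G" for y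
  proof -
    have "indicator {real i * s - \<delta> .. real i * s + \<delta>} (y - a) = (indicator (A i) y :: real)" for i
      by (auto simp: A_def indicator_def)
    moreover have "real n * s = G"
      using n by (simp add: s_def)
    ultimately show ?thesis
      using huber_bregman_ge_riemann_sum[OF \<delta>, where s=s and n=n and v="y - a"] by simp
  qed
  have row: "\<alpha> * real j \<le> (\<Sum>i\<in>{1..j}. measure M (A i))" if "j < n" for j
    using sum_mono[of "{1..j}" "\<lambda>_. \<alpha>" "\<lambda>i. measure M (A i)"] A_measure that
    by (simp add: mult.commute)
  have "(\<Sum>j<n. \<alpha> * real j) \<le> (\<Sum>j<n. \<Sum>i\<in>{1..j}. measure M (A i))"
    by (intro sum_mono row) simp
  moreover have "(\<Sum>j<n. real j) = real n * (real n - 1) / 2"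
    by (induction n) (auto simp: algebra_simps)
  ultimately have count: "\<alpha> * (real n * (real n - 1) / 2) \<le> (\<Sum>j<n. \<Sum>i\<in>{1..j}. measure M (A i))"
    by (simp add: sum_distrib_left[symmetric])
  have "\<alpha> / 2 * G\<^sup>2 * (1 - 1 / real n) - G\<^sup>2 * (1 / real n)
      = s\<^sup>2 * (\<alpha> * (real n * (real n - 1) / 2)) - real n * s\<^sup>2"
    using n by (simp add: s_def power2_eq_square field_simps)
  also have "\<dots> \<le> s\<^sup>2 * (\<Sum>j<n. \<Sum>i\<in>{1..j}. measure M (A i)) - real n * s\<^sup>2"
    using count by (intro diff_right_mono mult_left_mono) auto
  also have "\<dots> = (\<integral>y. s\<^sup>2 * (\<Sum>j<n. \<Sum>i\<in>{1..j}. indicator (A i) y) - real n * s\<^sup>2 \<partial>M)"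
    using A_int A_sets by (simp add: integral_sum prob_space integrable_sum Int_absorb2 sets.sets_into_space)
  also have "\<dots> \<le> (\<integral>y. huber_bregman \<delta> (y - a) G \<partial>M)"
    using A_int riemann
    by (intro integral_mono integrable_huber_bregman sets_M \<delta>[THEN less_imp_le] finite_measure_axioms)
       (auto intro!: integrable_sum)
  finally show ?thesis .
qed

lemma huber_bregman_integral_ge:
  fixes M :: "real measure"
  assumes "prob_space M" "sets M = sets borel" "\<delta> > 0"
    and "\<And>c. \<bar>c\<bar> \<le> \<bar>G\<bar> \<Longrightarrow> \<alpha> \<le> measure M {a + c - \<delta> .. a + c + \<delta>}"
  shows "\<alpha> / 2 * G\<^sup>2 \<le> (\<integral>y. huber_bregman \<delta> (y - a) G \<partial>M)"
proof -
  have "(\<lambda>n. \<alpha> / 2 * G\<^sup>2 * (1 - 1 / real n) - G\<^sup>2 * (1 / real n))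
      \<longlonglongrightarrow> \<alpha> / 2 * G\<^sup>2 * (1 - 0) - G\<^sup>2 * 0"
    by (intro tendsto_intros)
  then have "\<alpha> / 2 * G\<^sup>2 * (1 - 0) - G\<^sup>2 * 0 \<le> (\<integral>y. huber_bregman \<delta> (y - a) G \<partial>M)"
    using huber_bregman_integral_ge_approx[OF assms(1-3) _ assms(4)]
    by (intro LIMSEQ_le_const2) (auto intro!: exI[of _ 1])
  then show ?thesis
    by simp
qed

lemma memLp_two_imp_integrable_square: "memLp \<mu> 2 g \<Longrightarrow> integrable \<mu> (\<lambda>x. (g x)\<^sup>2)"
  by (simp add: memLp_def)

lemma Lnorm_two_squared: "(Lnorm \<mu> 2 g)\<^sup>2 = (\<integral>x. (g x)\<^sup>2 \<partial>\<mu>)"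
  by (simp add: Lnorm_def powr_half_sqrt)

lemma Lnorm_powr: "p > 0 \<Longrightarrow> Lnorm \<mu> p g powr p = (\<integral>x. \<bar>g x\<bar> powr p \<partial>\<mu>)"
  by (simp add: Lnorm_def powr_powr)

lemma integral_square_tail_le:
  fixes g :: "'a \<Rightarrow> real"
  assumes R: "R > 0" and \<epsilon>: "\<epsilon> > 0" and g2: "memLp \<mu> 2 g" and gp: "memLp \<mu> (2 + \<epsilon>) g"
  shows "(\<integral>x. (if \<bar>g x\<bar> \<le> R then 0 else (g x)\<^sup>2) \<partial>\<mu>)
           \<le> R powr (- \<epsilon>) * (\<integral>x. \<bar>g x\<bar> powr (2 + \<epsilon>) \<partial>\<mu>)"
proof -
  have [measurable]: "g \<in> borel_measurable \<mu>"
    using g2 by (simp add: memLp_def)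
  have pointwise: "(if \<bar>g x\<bar> \<le> R then 0 else (g x)\<^sup>2) \<le> R powr (- \<epsilon>) * \<bar>g x\<bar> powr (2 + \<epsilon>)" for x
  proof (cases "\<bar>g x\<bar> \<le> R")
    case False
    then have "R powr \<epsilon> \<le> \<bar>g x\<bar> powr \<epsilon>"
      using R \<epsilon> by (intro powr_mono2) auto
    then have "(g x)\<^sup>2 * R powr \<epsilon> \<le> \<bar>g x\<bar> powr 2 * \<bar>g x\<bar> powr \<epsilon>"
      by (simp add: mult_left_mono)
    then show ?thesis
      using False R by (simp add: powr_add powr_minus field_simps)
  qed simp
  show ?thesis
    using g2 gp pointwise unfolding memLp_def
    by (subst integral_mult_right_zero[symmetric], intro integral_mono)
       (auto intro: Bochner_Integration.integrable_bound[OF memLp_two_imp_integrable_square[OF g2]])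
qed

lemma radius_powr_bound:
  fixes C' \<epsilon> r N :: real
  assumes C': "C' > 0" and \<epsilon>: "\<epsilon> > 0" and r: "r > 0" and N: "0 \<le> N" "N \<le> r"
  shows "((sqrt 2 * C') powr ((2 + \<epsilon>) / \<epsilon>) * r) powr (- \<epsilon>) * (C' * N) powr (2 + \<epsilon>) \<le> N\<^sup>2 / 2"
proof -
  have "(2 + \<epsilon>) / \<epsilon> * - \<epsilon> = - (2 + \<epsilon>)"
    using \<epsilon> by simp
  then have "((sqrt 2 * C') powr ((2 + \<epsilon>) / \<epsilon>) * r) powr (- \<epsilon>) * (C' * N) powr (2 + \<epsilon>)
      = (C' * N) powr (2 + \<epsilon>) / (sqrt 2 * C') powr (2 + \<epsilon>) * r powr (- \<epsilon>)"
    using \<epsilon> by (simp add: powr_mult powr_powr powr_minus_divide)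
  also have "(C' * N) powr (2 + \<epsilon>) / (sqrt 2 * C') powr (2 + \<epsilon>) = (N / sqrt 2) powr (2 + \<epsilon>)"
    using C' by (simp add: powr_divide[symmetric])
  also have "(N / sqrt 2) powr (2 + \<epsilon>) = N\<^sup>2 / 2 * (N / sqrt 2) powr \<epsilon>"
    using N by (simp add: powr_add power_divide)
  also have "N\<^sup>2 / 2 * (N / sqrt 2) powr \<epsilon> * r powr (- \<epsilon>) = N\<^sup>2 / 2 * (N / (sqrt 2 * r)) powr \<epsilon>"
    by (simp add: powr_minus_divide powr_divide powr_mult)
  also have "\<dots> \<le> N\<^sup>2 / 2 * 1"
  proof -
    have "N \<le> 1 * r" using N by simp
    also have "\<dots> \<le> sqrt 2 * r" using r by (intro mult_right_mono) auto
    finally show ?thesis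
      using N r \<epsilon> by (intro mult_left_mono powr_le1) (auto simp: divide_le_eq)
  qed
  finally show ?thesis by simp
qed

lemma truncated_second_moment_ge:
  fixes g :: "'a \<Rightarrow> real"
  assumes \<epsilon>: "\<epsilon> > 0" and C': "C' > 0" and r: "r > 0"
    and g2: "memLp \<mu> 2 g" and gp: "memLp \<mu> (2 + \<epsilon>) g"
    and norm_eq: "Lnorm \<mu> (2 + \<epsilon>) g \<le> C' * Lnorm \<mu> 2 g" and small: "Lnorm \<mu> 2 g \<le> r"
  shows "(Lnorm \<mu> 2 g)\<^sup>2 / 2
           \<le> (\<integral>x. (if \<bar>g x\<bar> \<le> (sqrt 2 * C') powr ((2 + \<epsilon>) / \<epsilon>) * r then (g x)\<^sup>2 else 0) \<partial>\<mu>)"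
proof -
  define R where "R = (sqrt 2 * C') powr ((2 + \<epsilon>) / \<epsilon>) * r"
  define N where "N = Lnorm \<mu> 2 g"
  have R: "R > 0" and N: "0 \<le> N"
    using C' r by (simp_all add: R_def N_def Lnorm_def)
  have [measurable]: "g \<in> borel_measurable \<mu>"
    using g2 by (simp add: memLp_def)
  have sq: "integrable \<mu> (\<lambda>x. (g x)\<^sup>2)"
    by (rule memLp_two_imp_integrable_square[OF g2])
  have tail_int: "integrable \<mu> (\<lambda>x. if \<bar>g x\<bar> \<le> R then 0 else (g x)\<^sup>2)"
    by (rule Bochner_Integration.integrable_bound[OF sq]) auto
  have "(\<integral>x. (if \<bar>g x\<bar> \<le> R then 0 else (g x)\<^sup>2) \<partial>\<mu>) \<le> R powr (- \<epsilon>) * Lnorm \<mu> (2 + \<epsilon>) g powr (2 + \<epsilon>)"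
    using integral_square_tail_le[OF R \<epsilon> g2 gp] \<epsilon> by (simp add: Lnorm_powr)
  also have "\<dots> \<le> R powr (- \<epsilon>) * (C' * N) powr (2 + \<epsilon>)"
    using norm_eq \<epsilon> by (intro mult_left_mono powr_mono2) (auto simp: N_def Lnorm_def)
  also have "\<dots> \<le> N\<^sup>2 / 2"
    unfolding R_def using radius_powr_bound[OF C' \<epsilon> r N] small by (simp add: N_def)
  finally have "(\<integral>x. (if \<bar>g x\<bar> \<le> R then 0 else (g x)\<^sup>2) \<partial>\<mu>) \<le> N\<^sup>2 / 2" .
  moreover have "(\<integral>x. (if \<bar>g x\<bar> \<le> R then (g x)\<^sup>2 else 0) \<partial>\<mu>)
      = N\<^sup>2 - (\<integral>x. (if \<bar>g x\<bar> \<le> R then 0 else (g x)\<^sup>2) \<partial>\<mu>)"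
    unfolding N_def Lnorm_two_squared
    by (subst Bochner_Integration.integral_diff[OF sq tail_int, symmetric]) (auto intro: Bochner_Integration.integral_cong)
  ultimately show ?thesis
    by (simp add: R_def N_def)
qed

locale conditional_law = prob_space \<mu> for \<mu> :: "'x measure" +
  fixes K :: "'x \<Rightarrow> real measure"
  assumes K_measurable: "K \<in> \<mu> \<rightarrow>\<^sub>M prob_algebra borel"
begin

lemma prob_space_K: "x \<in> space \<mu> \<Longrightarrow> prob_space (K x)"
  and sets_K: "x \<in> space \<mu> \<Longrightarrow> sets (K x) = sets borel"
  using measurable_space[OF K_measurable] by (auto simp: space_prob_algebra)

lemma measurable_Pair_K:
  assumes "x \<in> space \<mu>" shows "Pair x \<in> K x \<rightarrow>\<^sub>M \<mu> \<Otimes>\<^sub>M borel"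
proof -
  have "Pair x \<in> borel \<rightarrow>\<^sub>M \<mu> \<Otimes>\<^sub>M borel"
    using assms by measurable
  then show ?thesis
    using measurable_cong_sets[OF sets_K[OF assms] refl] by blast
qed

lemma measurable_joint_law_kernel:
  "(\<lambda>x. distr (K x) (\<mu> \<Otimes>\<^sub>M borel) (Pair x)) \<in> \<mu> \<rightarrow>\<^sub>M subprob_algebra (\<mu> \<Otimes>\<^sub>M borel)"
  by (rule measurable_distr2[where f="\<lambda>x y. (x, y)"])
     (auto intro: measurable_prob_algebraD[OF K_measurable])

lemma sets_joint_law[measurable_cong]: "sets (joint_law \<mu> K) = sets (\<mu> \<Otimes>\<^sub>M borel)"
  unfolding joint_law_def by (rule sets_bind[OF _ not_empty]) simp

lemma nn_integral_joint_law:
  assumes "F \<in> borel_measurable (\<mu> \<Otimes>\<^sub>M borel)"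
  shows "(\<integral>\<^sup>+z. F z \<partial>joint_law \<mu> K) = (\<integral>\<^sup>+x. \<integral>\<^sup>+y. F (x, y) \<partial>K x \<partial>\<mu>)"
  unfolding joint_law_def nn_integral_bind[OF assms measurable_joint_law_kernel]
  using assms by (intro nn_integral_cong nn_integral_distr measurable_Pair_K) auto

lemma integrable_joint_law_fst:
  fixes \<phi> :: "'x \<Rightarrow> real"
  assumes "integrable \<mu> \<phi>"
  shows "integrable (joint_law \<mu> K) (\<lambda>z. \<phi> (fst z))"
proof (rule Bochner_Integration.integrableI_bounded)
  have [measurable]: "\<phi> \<in> borel_measurable \<mu>"
    using assms by simp
  show "(\<lambda>z. \<phi> (fst z)) \<in> borel_measurable (joint_law \<mu> K)"
    by measurable
  have "(\<integral>\<^sup>+z. norm (\<phi> (fst z)) \<partial>joint_law \<mu> K) = (\<integral>\<^sup>+x. norm (\<phi> x) \<partial>\<mu>)"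
    by (simp add: nn_integral_joint_law prob_space_K prob_space.emeasure_space_1 cong: nn_integral_cong)
  also have "\<dots> < \<infinity>"
    using assms by (simp add: integrable_iff_bounded)
  finally show "(\<integral>\<^sup>+z. norm (\<phi> (fst z)) \<partial>joint_law \<mu> K) < \<infinity>" .
qed

lemma integrable_joint_law_dominated:
  fixes F :: "'x \<times> real \<Rightarrow> real"
  assumes [measurable]: "F \<in> borel_measurable (\<mu> \<Otimes>\<^sub>M borel)" "G \<in> borel_measurable \<mu>"
    and G_sq: "integrable \<mu> (\<lambda>x. (G x)\<^sup>2)"
    and bound: "\<And>z. \<bar>F z\<bar> \<le> c * \<bar>G (fst z)\<bar>"
  shows "integrable (joint_law \<mu> K) F"
proof -
  have "integrable \<mu> G"
    by (rule square_integrable_imp_integrable[OF _ G_sq]) measurable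
  then have "integrable \<mu> (\<lambda>x. c * \<bar>G x\<bar>)"
    by (intro integrable_mult_right integrable_abs)
  then show ?thesis
  proof (rule Bochner_Integration.integrable_bound[OF integrable_joint_law_fst])
    show "AE z in joint_law \<mu> K. norm (F z) \<le> norm (c * \<bar>G (fst z)\<bar>)"
      using bound by (intro AE_I2) (metis abs_ge_self order_trans real_norm_def)
  qed measurable
qed

lemma cond_cdf_diff_le_measure:
  assumes "x \<in> space \<mu>" "a < b"
  shows "cond_cdf K x b - cond_cdf K x a \<le> measure (K x) {a..b}"
proof -
  have K_finite: "finite_measure (K x)"
    using prob_space_K[OF assms(1)] by (rule prob_space.finite_measure)
  then have "finite_borel_measure (K x)"
    using sets_K[OF assms(1)] by (simp add: finite_borel_measure_def finite_borel_measure_axioms_def)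
  then have "cond_cdf K x b - cond_cdf K x a = measure (K x) {a<..b}"
    using finite_borel_measure.cdf_diff_eq[OF _ assms(2)] by (simp add: cond_cdf_def cdf_def)
  also have "\<dots> \<le> measure (K x) {a..b}"
    using sets_K[OF assms(1)] by (intro finite_measure.finite_measure_mono[OF K_finite]) auto
  finally show ?thesis .
qed

lemma huber_bregman_cond_integral_ge:
  assumes x: "x \<in> space \<mu>" and \<delta>: "\<delta> > 0"
    and window: "\<And>c. \<bar>c\<bar> \<le> R \<Longrightarrow> \<alpha> \<le> cond_cdf K x (a + c + \<delta>) - cond_cdf K x (a + c - \<delta>)"
  shows "\<alpha> / 2 * (if \<bar>G\<bar> \<le> R then G\<^sup>2 else 0) \<le> (\<integral>y. huber_bregman \<delta> (y - a) G \<partial>K x)"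
proof (cases "\<bar>G\<bar> \<le> R")
  case True
  have "\<alpha> \<le> measure (K x) {a + c - \<delta> .. a + c + \<delta>}" if "\<bar>c\<bar> \<le> \<bar>G\<bar>" for c
    using window[of c] cond_cdf_diff_le_measure[OF x, of "a + c - \<delta>" "a + c + \<delta>"] that True \<delta>
    by simp
  with True show ?thesis
    using huber_bregman_integral_ge[OF prob_space_K[OF x] sets_K[OF x] \<delta>] by simp
next
  case False
  then show ?thesis
    using huber_bregman_nonneg[of \<delta>] \<delta> by simp
qed

lemma huber_bregman_joint_integral_ge:
  assumes \<delta>: "\<delta> > 0" and \<alpha>: "\<alpha> \<ge> 0"
    and [measurable]: "a \<in> borel_measurable \<mu>" "G \<in> borel_measurable \<mu>"
    and G_sq: "integrable \<mu> (\<lambda>x. (G x)\<^sup>2)"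
    and window: "\<And>x c. x \<in> space \<mu> \<Longrightarrow> \<bar>c\<bar> \<le> R \<Longrightarrow>
                   \<alpha> \<le> cond_cdf K x (a x + c + \<delta>) - cond_cdf K x (a x + c - \<delta>)"
  shows "\<alpha> / 2 * (\<integral>x. (if \<bar>G x\<bar> \<le> R then (G x)\<^sup>2 else 0) \<partial>\<mu>)
           \<le> (\<integral>z. huber_bregman \<delta> (snd z - a (fst z)) (G (fst z)) \<partial>joint_law \<mu> K)"
proof -
  define h where "h x = \<alpha> / 2 * (if \<bar>G x\<bar> \<le> R then (G x)\<^sup>2 else 0)" for x
  define B where "B z = huber_bregman \<delta> (snd z - a (fst z)) (G (fst z))" for z
  have B_measurable[measurable]: "B \<in> borel_measurable (\<mu> \<Otimes>\<^sub>M borel)"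
    unfolding B_def[abs_def] by measurable
  have h_int: "integrable \<mu> h"
  proof (rule Bochner_Integration.integrable_bound[OF integrable_mult_right[OF G_sq]])
    show "h \<in> borel_measurable \<mu>"
      unfolding h_def[abs_def] by measurable
    show "AE x in \<mu>. norm (h x) \<le> norm (\<alpha> / 2 * (G x)\<^sup>2)"
      using \<alpha> by (intro AE_I2) (simp add: h_def)
  qed
  have B_int: "integrable (joint_law \<mu> K) B"
    using abs_huber_bregman_le \<delta>
    by (intro integrable_joint_law_dominated[OF _ _ G_sq, where c="2 * \<delta>"]) (auto simp: B_def)
  have "ennreal (\<integral>x. h x \<partial>\<mu>) = (\<integral>\<^sup>+x. h x \<partial>\<mu>)"
    using \<alpha> by (intro nn_integral_eq_integral[symmetric, OF h_int]) (simp add: h_def)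
  also have "\<dots> \<le> (\<integral>\<^sup>+x. \<integral>\<^sup>+y. B (x, y) \<partial>K x \<partial>\<mu>)"
  proof (rule nn_integral_mono)
    fix x assume x: "x \<in> space \<mu>"
    have "(\<integral>\<^sup>+y. B (x, y) \<partial>K x) = ennreal (\<integral>y. B (x, y) \<partial>K x)"
      using integrable_huber_bregman[OF prob_space.finite_measure[OF prob_space_K[OF x]] sets_K[OF x]] \<delta>
        huber_bregman_nonneg[of \<delta>]
      by (simp add: B_def nn_integral_eq_integral)
    then show "ennreal (h x) \<le> (\<integral>\<^sup>+y. B (x, y) \<partial>K x)"
      using huber_bregman_cond_integral_ge[OF x \<delta> window[OF x]] by (simp add: h_def B_def ennreal_leI)
  qed
  also have "\<dots> = (\<integral>\<^sup>+z. B z \<partial>joint_law \<mu> K)"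
    by (rule nn_integral_joint_law[symmetric]) measurable
  also have "\<dots> = ennreal (\<integral>z. B z \<partial>joint_law \<mu> K)"
    using huber_bregman_nonneg[of \<delta>] \<delta>
    by (intro nn_integral_eq_integral[OF B_int]) (simp add: B_def)
  finally show ?thesis
    using B_int huber_bregman_nonneg[of \<delta>] \<delta>
    by (simp add: h_def B_def integral_nonneg_AE)
qed

lemma integral_huber_bregman_le_excess_risk:
  assumes \<delta>: "\<delta> \<ge> 0" and F_convex: "convex_class F"
    and loss_int: "\<forall>h\<in>F. integrable (joint_law \<mu> K) (huber_loss \<delta> h)"
    and fstar_in: "fstar \<in> F"
    and fstar_min: "\<forall>h\<in>F. (\<integral>z. huber_loss \<delta> fstar z \<partial>joint_law \<mu> K)
                            \<le> (\<integral>z. huber_loss \<delta> h z \<partial>joint_law \<mu> K)"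
    and f_in: "f \<in> F" and [measurable]: "f \<in> borel_measurable \<mu>" "fstar \<in> borel_measurable \<mu>"
    and diff_sq: "integrable \<mu> (\<lambda>x. (f x - fstar x)\<^sup>2)"
  shows "(\<integral>z. huber_bregman \<delta> (snd z - fstar (fst z)) (f (fst z) - fstar (fst z)) \<partial>joint_law \<mu> K)
           \<le> (\<integral>z. huber_loss \<delta> f z - huber_loss \<delta> fstar z \<partial>joint_law \<mu> K)"
proof -
  define g where "g = (\<lambda>x. f x - fstar x)"
  define u where "u = (\<lambda>z. snd z - fstar (fst z))"
  have [measurable]: "g \<in> borel_measurable \<mu>"
    unfolding g_def by measurable
  have g_sq: "integrable \<mu> (\<lambda>x. (g x)\<^sup>2)"
    using diff_sq by (simp add: g_def)
  have loss_segment: "huber_loss \<delta> (\<lambda>x. t * f x + (1 - t) * fstar x) = (\<lambda>z. huber \<delta> (u z - t * g (fst z)))" for t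
    by (auto simp: huber_loss_def g_def u_def algebra_simps)
  have segment_in_F: "(\<lambda>x. t * f x + (1 - t) * fstar x) \<in> F" if "0 \<le> t" "t \<le> 1" for t
    using F_convex f_in fstar_in that unfolding convex_class_def by blast
  have grad_int: "integrable (joint_law \<mu> K) (\<lambda>z. g (fst z) * huber_deriv \<delta> (u z))"
    using abs_mult_huber_deriv_le \<delta>
    by (intro integrable_joint_law_dominated[OF _ _ g_sq, where c=\<delta>]) (auto simp: u_def)
  have excess_int: "integrable (joint_law \<mu> K) (\<lambda>z. huber_loss \<delta> f z - huber_loss \<delta> fstar z)"
    using loss_int f_in fstar_in by auto
  have "huber_bregman \<delta> (u z) (g (fst z))
      = (huber_loss \<delta> f z - huber_loss \<delta> fstar z) + g (fst z) * huber_deriv \<delta> (u z)" for z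
    by (simp add: huber_bregman_def huber_loss_def g_def u_def split_beta algebra_simps)
  then have "(\<integral>z. huber_bregman \<delta> (u z) (g (fst z)) \<partial>joint_law \<mu> K)
      = (\<integral>z. huber_loss \<delta> f z - huber_loss \<delta> fstar z \<partial>joint_law \<mu> K)
        + (\<integral>z. g (fst z) * huber_deriv \<delta> (u z) \<partial>joint_law \<mu> K)"
    by (simp add: Bochner_Integration.integral_add[OF excess_int grad_int])
  moreover have "(\<integral>z. g (fst z) * huber_deriv \<delta> (u z) \<partial>joint_law \<mu> K) \<le> 0"
    using \<delta> loss_int fstar_min segment_in_F loss_segment[of 0]
    by (intro huber_first_order_optimality[OF _ _ _ integrable_joint_law_fst[OF g_sq] grad_int])
       (auto simp: loss_segment[symmetric])
  ultimately show ?thesis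
    by (simp add: g_def u_def)
qed

end

theorem theorem7:
  fixes \<mu> :: "'x measure" and K :: "'x \<Rightarrow> real measure"
    and F :: "('x \<Rightarrow> real) set" and fstar :: "'x \<Rightarrow> real"
    and \<delta> \<epsilon> C' \<alpha> r :: real
  assumes mu: "prob_space \<mu>"
    and K_meas: "K \<in> measurable \<mu> (prob_algebra borel)"
    and delta: "\<delta> > 0"
    and eps: "\<epsilon> > 0"
    and F_meas: "\<forall>f\<in>F. f \<in> borel_measurable \<mu>"
    and F_convex: "convex_class F"
    and loss_int: "\<forall>f\<in>F. integrable (joint_law \<mu> K) (huber_loss \<delta> f)"
    and fstar_in: "fstar \<in> F"
    and fstar_min: "\<forall>f\<in>F. (\<integral>z. huber_loss \<delta> fstar z \<partial>joint_law \<mu> K)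
                            \<le> (\<integral>z. huber_loss \<delta> f z \<partial>joint_law \<mu> K)"
    and C'_pos: "C' > 0"
    and NormEq: "\<forall>f\<in>F. memLp \<mu> 2 (\<lambda>x. f x - fstar x) \<longrightarrow>
                   memLp \<mu> (2 + \<epsilon>) (\<lambda>x. f x - fstar x) \<and>
                   Lnorm \<mu> (2 + \<epsilon>) (\<lambda>x. f x - fstar x) \<le> C' * Lnorm \<mu> 2 (\<lambda>x. f x - fstar x)"
    and alpha: "\<alpha> > 0" and r: "r > 0"
    and H: "\<forall>x z. \<bar>z - fstar x\<bar> \<le> (sqrt 2 * C') powr ((2 + \<epsilon>) / \<epsilon>) * r \<longrightarrow>
                 cond_cdf K x (z + \<delta>) - cond_cdf K x (z - \<delta>) \<ge> \<alpha>"
    and f_in: "f \<in> F"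
    and f_L2: "memLp \<mu> 2 (\<lambda>x. f x - fstar x)"
    and f_close: "Lnorm \<mu> 2 (\<lambda>x. f x - fstar x) \<le> r"
  shows "(Lnorm \<mu> 2 (\<lambda>x. f x - fstar x))\<^sup>2
           \<le> 4 / \<alpha> * (\<integral>z. huber_loss \<delta> f z - huber_loss \<delta> fstar z \<partial>joint_law \<mu> K)"
proof -
  interpret conditional_law \<mu> K
    using mu K_meas by (simp add: conditional_law_def conditional_law_axioms_def)
  define g where "g = (\<lambda>x. f x - fstar x)"
  define R where "R = (sqrt 2 * C') powr ((2 + \<epsilon>) / \<epsilon>) * r"
  have [measurable]: "f \<in> borel_measurable \<mu>" "fstar \<in> borel_measurable \<mu>"
    using F_meas f_in fstar_in by auto
  have [measurable]: "g \<in> borel_measurable \<mu>"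
    unfolding g_def by measurable
  have g_L2: "memLp \<mu> 2 g" and g_NormEq: "memLp \<mu> (2 + \<epsilon>) g" "Lnorm \<mu> (2 + \<epsilon>) g \<le> C' * Lnorm \<mu> 2 g"
    using NormEq f_in f_L2 unfolding g_def by auto
  have "(Lnorm \<mu> 2 g)\<^sup>2 \<le> 2 * (\<integral>x. (if \<bar>g x\<bar> \<le> R then (g x)\<^sup>2 else 0) \<partial>\<mu>)" (is "_ \<le> 2 * ?T")
    using truncated_second_moment_ge[OF eps C'_pos r g_L2 g_NormEq] f_close by (simp add: R_def g_def)
  also have "2 * ?T \<le> 4 / \<alpha> * (\<integral>z. huber_loss \<delta> f z - huber_loss \<delta> fstar z \<partial>joint_law \<mu> K)"
  proof -
    have "\<alpha> / 2 * ?T \<le> (\<integral>z. huber_bregman \<delta> (snd z - fstar (fst z)) (g (fst z)) \<partial>joint_law \<mu> K)"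
      using H alpha memLp_two_imp_integrable_square[OF g_L2]
      by (intro huber_bregman_joint_integral_ge[OF delta]) (auto simp: R_def)
    also have "\<dots> \<le> (\<integral>z. huber_loss \<delta> f z - huber_loss \<delta> fstar z \<partial>joint_law \<mu> K)"
      using delta F_convex loss_int fstar_in fstar_min f_in memLp_two_imp_integrable_square[OF f_L2]
      unfolding g_def by (intro integral_huber_bregman_le_excess_risk) auto
    finally show ?thesis
      using alpha by (simp add: field_simps)
  qed
  finally show ?thesis
    by (simp add: g_def)
qed

end
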